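(* Let $G$ be a finite simple connected graph with $n\ge 2$ vertices and maximum degree $\Delta$. Then (a) $c_{\infty}(G)\ge \dfrac{\iota_e n}{\Delta^2-\Delta+\iota_e(\Delta+1)}\ge \dfrac{\iota_e n}{2\Delta^2}$; (b) $c_{\infty}(G)\ge \dfrac{\iota_v n}{3\Delta+\iota_v(\Delta+1)}$; (c) $c_{\infty}(G)\ge \dfrac{\iota_v n}{4\Delta}$, where $\iota_e=\iota_e(G)$ and $\iota_v=\iota_v(G)$.
   Context: Cops and Robber with an infinitely fast robber: the game is played on a graph $G$. A set of cops first choose initial vertices (several cops may share a vertex); then the robber, knowing their positions, chooses a vertex. Then the players move in alternating rounds, cops first. In the cops' turn each cop either stays or moves to an adjacent vertex; in the robber's turn she either stays or moves along any path of $G$ starting at her current vertex that contains no vertex currently occupied by a cop. The cops win if at some point a cop moves to the vertex occupied by the robber. $c_{\infty}(G)$ is the minimum number of cops for which the cops have a strategy that guarantees a win. For $S\subseteq V(G)$, $\partial S$ is the set of edges with exactly one endpoint in $S$, and $N(S)$ is the set of vertices having a neighbour in $S$. The edge- and vertex-isoperimetric numbers are $\iota_e(G)=\min_{0<|S|\le n/2}|\partial S|/|S|$ and $\iota_v(G)=\min_{0<|S|\le n/2}|N(S)\setminus S|/|S|$. *)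

theory Defs
  imports Complex_Main
begin

definition simple_graph :: "'a set \<Rightarrow> ('a \<Rightarrow> 'a \<Rightarrow> bool) \<Rightarrow> bool" where
  "simple_graph V E \<longleftrightarrow> finite V \<and> (\<forall>u v. E u v \<longrightarrow> u \<in> V \<and> v \<in> V)
     \<and> (\<forall>u v. E u v \<longrightarrow> E v u) \<and> (\<forall>u. \<not> E u u)"

definition connected_graph :: "'a set \<Rightarrow> ('a \<Rightarrow> 'a \<Rightarrow> bool) \<Rightarrow> bool" where
  "connected_graph V E \<longleftrightarrow> (\<forall>u\<in>V. \<forall>v\<in>V. E\<^sup>*\<^sup>* u v)"

definition degree :: "('a \<Rightarrow> 'a \<Rightarrow> bool) \<Rightarrow> 'a \<Rightarrow> nat" where
  "degree E u = card {v. E u v}"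

definition max_degree :: "'a set \<Rightarrow> ('a \<Rightarrow> 'a \<Rightarrow> bool) \<Rightarrow> nat" where
  "max_degree V E = Max (degree E ` V)"

definition edge_boundary :: "'a set \<Rightarrow> ('a \<Rightarrow> 'a \<Rightarrow> bool) \<Rightarrow> 'a set \<Rightarrow> ('a \<times> 'a) set" where
  "edge_boundary V E S = {(u, v). u \<in> S \<and> v \<in> V - S \<and> E u v}"

definition nbhd :: "'a set \<Rightarrow> ('a \<Rightarrow> 'a \<Rightarrow> bool) \<Rightarrow> 'a set \<Rightarrow> 'a set" where
  "nbhd V E S = {v \<in> V. \<exists>u\<in>S. E u v}"

definition small_sets :: "'a set \<Rightarrow> 'a set set" where
  "small_sets V = {S. S \<subseteq> V \<and> S \<noteq> {} \<and> 2 * card S \<le> card V}"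

definition iota_e :: "'a set \<Rightarrow> ('a \<Rightarrow> 'a \<Rightarrow> bool) \<Rightarrow> real" where
  "iota_e V E = Min ((\<lambda>S. real (card (edge_boundary V E S)) / real (card S)) ` small_sets V)"

definition iota_v :: "'a set \<Rightarrow> ('a \<Rightarrow> 'a \<Rightarrow> bool) \<Rightarrow> real" where
  "iota_v V E = Min ((\<lambda>S. real (card (nbhd V E S - S)) / real (card S)) ` small_sets V)"

text \<open>Cops and infinitely fast robber. Cop positions: a list (one entry per cop).\<close>

definition cop_move :: "('a \<Rightarrow> 'a \<Rightarrow> bool) \<Rightarrow> 'a list \<Rightarrow> 'a list \<Rightarrow> bool" where
  "cop_move E C C' \<longleftrightarrow> list_all2 (\<lambda>a b. b = a \<or> E a b) C C'"

text \<open>Vertices the robber can reach from r along a path of G avoiding the set X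
  of cop-occupied vertices (r itself is assumed unoccupied).\<close>
definition robber_reach :: "('a \<Rightarrow> 'a \<Rightarrow> bool) \<Rightarrow> 'a set \<Rightarrow> 'a \<Rightarrow> 'a \<Rightarrow> bool" where
  "robber_reach E X r r' \<longleftrightarrow> (\<lambda>u v. E u v \<and> v \<notin> X)\<^sup>*\<^sup>* r r'"

text \<open>cop_win E C r: it is the cops' turn, cops at C, robber at r, and the cops can
  force a capture (least fixed point = attractor of the reachability game).\<close>
inductive cop_win :: "('a \<Rightarrow> 'a \<Rightarrow> bool) \<Rightarrow> 'a list \<Rightarrow> 'a \<Rightarrow> bool" for E where
  capture: "cop_move E C C' \<Longrightarrow> r \<in> set C' \<Longrightarrow> cop_win E C r"
| step: "cop_move E C C' \<Longrightarrow> r \<notin> set C' \<Longrightarrow>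
          (\<forall>r'. robber_reach E (set C') r r' \<longrightarrow> cop_win E C' r') \<Longrightarrow> cop_win E C r"

definition cops_win_with :: "'a set \<Rightarrow> ('a \<Rightarrow> 'a \<Rightarrow> bool) \<Rightarrow> nat \<Rightarrow> bool" where
  "cops_win_with V E k \<longleftrightarrow> (\<exists>C. length C = k \<and> set C \<subseteq> V \<and>
      (\<forall>r \<in> V - set C. cop_win E C r))"

definition c_inf :: "'a set \<Rightarrow> ('a \<Rightarrow> 'a \<Rightarrow> bool) \<Rightarrow> nat" where
  "c_inf V E = (LEAST k. cops_win_with V E k)"

end

theory Submission
  imports Defs
begin

text \<open>Call a vertex safe for a cop position C if it is at distance at least 2 from every
  cop. If every position of k cops leaves a component of the safe subgraph with more than
  n/2 vertices, the robber wins against k cops by always staying in such a component: the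
  cops move into the closed neighbourhood N[C], so the old component remains cop-free and
  reachable, and it meets the new big component. Hence some position of c_inf cops has all
  safe components of size at most n/2. Summing the isoperimetric inequality over these
  components, or applying it to a suitable union of them, bounds the safe set by the at most
  k\<Delta> vertices of N(C) - C, while n \<le> |safe| + k + |N(C) - C|.\<close>

section \<open>Degrees and isoperimetric constants\<close>

lemma finite_small_sets: "finite V \<Longrightarrow> finite (small_sets V)"
  by (rule finite_subset[of _ "Pow V"]) (auto simp: small_sets_def)

lemma small_sets_Min_ratio_le:
  assumes "finite V" "S \<subseteq> V" "S \<noteq> {}" "2 * card S \<le> card V"
  shows "Min ((\<lambda>S. real (f S) / real (card S)) ` small_sets V) * card S \<le> f S"
proof -
  have "S \<in> small_sets V" using assms by (simp add: small_sets_def)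
  then have "Min ((\<lambda>S. real (f S) / real (card S)) ` small_sets V) \<le> f S / card S"
    using finite_small_sets[OF assms(1)] by (intro Min_le) auto
  moreover have "card S > 0" using assms by (meson card_gt_0_iff finite_subset)
  ultimately show ?thesis by (simp add: field_simps)
qed

lemma small_sets_Min_ratio_nonneg:
  assumes "finite V" "2 \<le> card V"
  shows "0 \<le> Min ((\<lambda>S. real (f S) / real (card S)) ` small_sets V)"
proof -
  obtain v where "v \<in> V" using assms(2) by fastforce
  then have "{v} \<in> small_sets V" using assms(2) by (simp add: small_sets_def)
  then show ?thesis using finite_small_sets[OF assms(1)] by (intro Min.boundedI) auto
qed

context
  fixes V :: "'a set" and E :: "'a \<Rightarrow> 'a \<Rightarrow> bool"
  assumes G: "simple_graph V E"
begin

lemma simple_graph_finite: "finite V"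
  using G by (simp add: simple_graph_def)

lemma simple_graph_edgeD: "E u v \<Longrightarrow> u \<in> V \<and> v \<in> V"
  using G by (simp add: simple_graph_def)

lemma simple_graph_sym: "E u v \<Longrightarrow> E v u"
  using G by (simp add: simple_graph_def)

lemma finite_neighbours: "finite {v. E u v}"
  by (rule finite_subset[OF _ simple_graph_finite]) (auto dest: simple_graph_edgeD)

lemma degree_le_max_degree: "u \<in> V \<Longrightarrow> degree E u \<le> max_degree V E"
  unfolding max_degree_def using simple_graph_finite by (intro Max_ge) auto

lemma max_degree_ge_1:
  assumes "connected_graph V E" "2 \<le> card V"
  shows "1 \<le> max_degree V E"
proof -
  obtain u v where uv: "u \<in> V" "v \<in> V" "u \<noteq> v"
    using assms(2) simple_graph_finite card_le_Suc0_iff_eq[of V] by force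
  then have "E\<^sup>*\<^sup>* u v" using assms(1) by (simp add: connected_graph_def)
  then obtain x where "E u x" using uv(3) by (cases rule: converse_rtranclpE) auto
  then have "1 \<le> degree E u"
    using finite_neighbours[of u] by (auto simp: degree_def Suc_le_eq card_gt_0_iff)
  then show ?thesis using degree_le_max_degree[OF uv(1)] by simp
qed

lemma iota_e_mult_card_le:
  assumes "S \<subseteq> V" "2 * card S \<le> card V"
  shows "iota_e V E * card S \<le> card (edge_boundary V E S)"
  using small_sets_Min_ratio_le[OF simple_graph_finite assms(1) _ assms(2),
      of "\<lambda>S. card (edge_boundary V E S)"]
  by (cases "S = {}") (simp_all add: iota_e_def)

lemma iota_v_mult_card_le:
  assumes "S \<subseteq> V" "2 * card S \<le> card V"
  shows "iota_v V E * card S \<le> card (nbhd V E S - S)"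
  using small_sets_Min_ratio_le[OF simple_graph_finite assms(1) _ assms(2),
      of "\<lambda>S. card (nbhd V E S - S)"]
  by (cases "S = {}") (simp_all add: iota_v_def)

lemma iota_e_nonneg: "2 \<le> card V \<Longrightarrow> 0 \<le> iota_e V E"
  unfolding iota_e_def by (rule small_sets_Min_ratio_nonneg[OF simple_graph_finite])

lemma iota_v_nonneg: "2 \<le> card V \<Longrightarrow> 0 \<le> iota_v V E"
  unfolding iota_v_def by (rule small_sets_Min_ratio_nonneg[OF simple_graph_finite])

lemma card_nbhd_le:
  assumes XV: "X \<subseteq> V"
  shows "card (nbhd V E X) \<le> card X * max_degree V E"
proof -
  have finX: "finite X" using finite_subset[OF XV simple_graph_finite] .
  have "nbhd V E X \<subseteq> (\<Union>x\<in>X. {v. E x v})" by (auto simp: nbhd_def)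
  then have "card (nbhd V E X) \<le> card (\<Union>x\<in>X. {v. E x v})"
    by (intro card_mono) (simp_all add: finX finite_neighbours)
  also have "\<dots> \<le> (\<Sum>x\<in>X. card {v. E x v})" using finX by (rule card_UN_le)
  also have "\<dots> \<le> (\<Sum>x\<in>X. max_degree V E)"
  proof (rule sum_mono)
    fix x assume "x \<in> X"
    then show "card {v. E x v} \<le> max_degree V E"
      using degree_le_max_degree[of x] XV unfolding degree_def by blast
  qed
  finally show ?thesis by simp
qed

lemma iota_e_le_max_degree:
  assumes "2 \<le> card V"
  shows "iota_e V E \<le> max_degree V E"
proof -
  obtain v where v: "v \<in> V" using assms by fastforce
  have "iota_e V E \<le> card (edge_boundary V E {v})"
    using iota_e_mult_card_le[of "{v}"] v assms by simp
  also have "card (edge_boundary V E {v}) \<le> card (Pair v ` {u. E v u})"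
    by (intro card_mono) (auto simp: edge_boundary_def finite_neighbours)
  also have "\<dots> \<le> max_degree V E"
    using card_image_le[OF finite_neighbours] degree_le_max_degree[OF v]
    by (metis degree_def le_trans)
  finally show ?thesis by simp
qed

lemma iota_v_le_max_degree:
  assumes "2 \<le> card V"
  shows "iota_v V E \<le> max_degree V E"
proof -
  obtain v where v: "v \<in> V" using assms by fastforce
  have "iota_v V E \<le> card (nbhd V E {v} - {v})"
    using iota_v_mult_card_le[of "{v}"] v assms by simp
  also have "card (nbhd V E {v} - {v}) \<le> degree E v"
    unfolding degree_def by (intro card_mono) (auto simp: nbhd_def finite_neighbours)
  also have "\<dots> \<le> max_degree V E" using degree_le_max_degree[OF v] .
  finally show ?thesis by simp
qed

text \<open>Test with a set S of half the vertices: \<open>|N(S) - S| \<le> |V - S| \<le> |S| + 1\<close>.\<close>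
lemma iota_v_le_three_halves:
  assumes "5 \<le> card V"
  shows "2 * iota_v V E \<le> 3"
proof -
  obtain S where S: "S \<subseteq> V" "card S = card V div 2"
    using obtain_subset_with_card_n[of "card V div 2" V] by auto
  have "card (nbhd V E S - S) \<le> card (V - S)"
    using simple_graph_finite by (intro card_mono) (auto simp: nbhd_def)
  also have "\<dots> = card V - card S"
    using S(1) simple_graph_finite by (simp add: card_Diff_subset finite_subset)
  finally have "iota_v V E * card S \<le> card S + 1"
    using iota_v_mult_card_le[OF S(1)] S(2) by simp
  moreover have "2 \<le> real (card S)" using assms S(2) by simp
  ultimately have "2 * (iota_v V E * card S) \<le> 3 * real (card S)" by linarith
  then have "(2 * iota_v V E) * card S \<le> 3 * real (card S)" by (simp only: mult.assoc)
  then show ?thesis by (rule mult_right_le_imp_le) (use \<open>2 \<le> real (card S)\<close> in simp)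
qed

end

section \<open>Components of the safe subgraph\<close>

definition safe_set :: "'a set \<Rightarrow> ('a \<Rightarrow> 'a \<Rightarrow> bool) \<Rightarrow> 'a set \<Rightarrow> 'a set" where
  "safe_set V E X = V - X - nbhd V E X"

definition safe_edge :: "'a set \<Rightarrow> ('a \<Rightarrow> 'a \<Rightarrow> bool) \<Rightarrow> 'a set \<Rightarrow> 'a \<Rightarrow> 'a \<Rightarrow> bool" where
  "safe_edge V E X u v \<longleftrightarrow> E u v \<and> u \<in> safe_set V E X \<and> v \<in> safe_set V E X"

definition safe_comp :: "'a set \<Rightarrow> ('a \<Rightarrow> 'a \<Rightarrow> bool) \<Rightarrow> 'a set \<Rightarrow> 'a \<Rightarrow> 'a set" where
  "safe_comp V E X w = {v. (safe_edge V E X)\<^sup>*\<^sup>* w v}"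

definition safe_closed :: "'a set \<Rightarrow> ('a \<Rightarrow> 'a \<Rightarrow> bool) \<Rightarrow> 'a set \<Rightarrow> 'a set \<Rightarrow> bool" where
  "safe_closed V E X S \<longleftrightarrow> S \<subseteq> safe_set V E X \<and> (\<forall>u\<in>S. \<forall>v. safe_edge V E X u v \<longrightarrow> v \<in> S)"

definition small_safe_comps :: "'a set \<Rightarrow> ('a \<Rightarrow> 'a \<Rightarrow> bool) \<Rightarrow> 'a set \<Rightarrow> bool" where
  "small_safe_comps V E X \<longleftrightarrow> (\<forall>w\<in>safe_set V E X. 2 * card (safe_comp V E X w) \<le> card V)"

lemma safe_set_subset: "safe_set V E X \<subseteq> V"
  by (auto simp: safe_set_def)

lemma self_in_safe_comp: "w \<in> safe_comp V E X w"
  by (simp add: safe_comp_def)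

lemma safe_closed_safe_set: "safe_closed V E X (safe_set V E X)"
  by (auto simp: safe_closed_def safe_edge_def)

lemma safe_comp_subset_safe_closed:
  assumes "safe_closed V E X S" "w \<in> S"
  shows "safe_comp V E X w \<subseteq> S"
proof
  fix v assume "v \<in> safe_comp V E X w"
  then have "(safe_edge V E X)\<^sup>*\<^sup>* w v" by (simp add: safe_comp_def)
  then show "v \<in> S" using assms
    by (induction rule: rtranclp_induct) (auto simp: safe_closed_def)
qed

context
  fixes V :: "'a set" and E :: "'a \<Rightarrow> 'a \<Rightarrow> bool" and X :: "'a set"
  assumes G: "simple_graph V E"
begin

lemma safe_comp_sym: "v \<in> safe_comp V E X w \<Longrightarrow> w \<in> safe_comp V E X v"
proof -
  have "symp (safe_edge V E X)"
    by (rule sympI) (auto simp: safe_edge_def dest: simple_graph_sym[OF G])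
  then show "v \<in> safe_comp V E X w \<Longrightarrow> w \<in> safe_comp V E X v"
    by (auto simp: safe_comp_def dest: sympD[OF symp_rtranclp])
qed

lemma safe_comp_eq: "v \<in> safe_comp V E X w \<Longrightarrow> safe_comp V E X v = safe_comp V E X w"
  using safe_comp_sym by (auto simp: safe_comp_def intro: rtranclp_trans)

lemma safe_closed_safe_comp:
  assumes "w \<in> safe_set V E X"
  shows "safe_closed V E X (safe_comp V E X w)"
proof -
  have "safe_comp V E X w \<subseteq> safe_set V E X"
    using safe_comp_subset_safe_closed[OF safe_closed_safe_set[of V E X] assms] .
  then show ?thesis
    by (auto simp: safe_closed_def safe_comp_def intro: rtranclp.rtrancl_into_rtrancl)
qed

lemma safe_closed_Diff:
  "safe_closed V E X S \<Longrightarrow> safe_closed V E X T \<Longrightarrow> safe_closed V E X (S - T)"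
  unfolding safe_closed_def safe_edge_def using simple_graph_sym[OF G] by blast

lemma finite_safe_closed: "safe_closed V E X S \<Longrightarrow> finite S"
  using simple_graph_finite[OF G] safe_set_subset[of V E X]
  by (auto simp: safe_closed_def intro: finite_subset)

text \<open>No edge joins two different safe components.\<close>
lemma card_edge_boundary_safe_closed_split:
  assumes S: "safe_closed V E X S" and K: "safe_closed V E X K" "K \<subseteq> S"
  shows "card (edge_boundary V E K) + card (edge_boundary V E (S - K))
           \<le> card (edge_boundary V E S)"
proof -
  have fin: "finite (edge_boundary V E S)"
    by (rule finite_subset[of _ "V \<times> V"])
      (auto simp: edge_boundary_def simple_graph_finite[OF G] dest: simple_graph_edgeD[OF G])
  have "edge_boundary V E K \<union> edge_boundary V E (S - K) \<subseteq> edge_boundary V E S"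
    using S K unfolding edge_boundary_def safe_closed_def safe_edge_def
    using simple_graph_sym[OF G] by blast
  moreover have "edge_boundary V E K \<inter> edge_boundary V E (S - K) = {}"
    by (auto simp: edge_boundary_def)
  ultimately show ?thesis
    using fin by (metis card_Un_disjoint card_mono finite_Un rev_finite_subset)
qed

lemma iota_e_mult_card_safe_closed:
  assumes small: "small_safe_comps V E X"
  shows "safe_closed V E X S \<Longrightarrow> iota_e V E * card S \<le> card (edge_boundary V E S)"
proof (induction "card S" arbitrary: S rule: less_induct)
  case less
  have SW: "S \<subseteq> safe_set V E X" using less.prems by (simp add: safe_closed_def)
  show ?case
  proof (cases "2 * card S \<le> card V")
    case True
    then show ?thesis using iota_e_mult_card_le[OF G] SW safe_set_subset[of V E X] by blast
  next
    case False
    then obtain w where w: "w \<in> S" by fastforce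
    define K where "K = safe_comp V E X w"
    have K: "safe_closed V E X K" "K \<subseteq> S" "w \<in> K"
      using safe_closed_safe_comp safe_comp_subset_safe_closed[OF less.prems w]
        self_in_safe_comp[of w V E X] w SW by (auto simp: K_def)
    have "2 * card K \<le> card V" using small w SW by (auto simp: small_safe_comps_def K_def)
    then have IK: "iota_e V E * card K \<le> card (edge_boundary V E K)"
      using iota_e_mult_card_le[OF G] K(2) SW safe_set_subset[of V E X] by blast
    have finS: "finite S" using finite_safe_closed[OF less.prems] .
    have "card (S - K) < card S" using finS K(3) w by (intro psubset_card_mono) auto
    then have IH: "iota_e V E * card (S - K) \<le> card (edge_boundary V E (S - K))"
      using less.hyps safe_closed_Diff[OF less.prems K(1)] by blast
    have "card S = card K + card (S - K)"
      using card_Diff_subset[OF finite_subset[OF K(2) finS] K(2)] card_mono[OF finS K(2)] by simp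
    then show ?thesis
      using IK IH card_edge_boundary_safe_closed_split[OF less.prems K(1,2)]
      by (simp add: algebra_simps)
  qed
qed

text \<open>Removing components of size less than t one at a time, the size cannot jump
  from at least 2t to below t.\<close>
lemma safe_closed_size_between:
  fixes t :: real
  assumes "0 < t"
  shows "safe_closed V E X S \<Longrightarrow> \<forall>w\<in>S. card (safe_comp V E X w) < t \<Longrightarrow> t \<le> card S \<Longrightarrow>
    \<exists>S'. safe_closed V E X S' \<and> t \<le> card S' \<and> card S' < 2 * t"
proof (induction "card S" arbitrary: S rule: less_induct)
  case less
  have finS: "finite S" using finite_safe_closed[OF less.prems(1)] .
  obtain w where w: "w \<in> S" using less.prems(3) assms by fastforce
  have SW: "S \<subseteq> safe_set V E X" using less.prems(1) by (simp add: safe_closed_def)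
  define K where "K = safe_comp V E X w"
  have K: "safe_closed V E X K" "K \<subseteq> S" "w \<in> K"
    using safe_closed_safe_comp safe_comp_subset_safe_closed[OF less.prems(1) w]
      self_in_safe_comp[of w V E X] w SW by (auto simp: K_def)
  have "card (S - K) < card S" using finS K(3) w by (intro psubset_card_mono) auto
  moreover have "card S = card K + card (S - K)"
    using card_Diff_subset[OF finite_subset[OF K(2) finS] K(2)] card_mono[OF finS K(2)] by simp
  moreover have "card K < t" using less.prems(2) w by (simp add: K_def)
  ultimately show ?case
    using less.hyps[of "S - K"] less.prems safe_closed_Diff[OF less.prems(1) K(1)]
    by (cases "t \<le> card (S - K)") force+
qed

lemma exists_safe_closed_size_between:
  fixes t :: real
  assumes small: "small_safe_comps V E X" and "0 < t" "t \<le> card (safe_set V E X)"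
  obtains S where "safe_closed V E X S" "t \<le> card S" "2 * card S \<le> card V \<or> card S < 2 * t"
proof (cases "\<exists>w\<in>safe_set V E X. t \<le> card (safe_comp V E X w)")
  case True
  then show ?thesis
    using that safe_closed_safe_comp small by (auto simp: small_safe_comps_def)
next
  case False
  then show ?thesis
    using that safe_closed_size_between[OF assms(2) safe_closed_safe_set[of V E X]] assms(3)
    by (force simp: not_le)
qed

end

section \<open>Counting around a cop position\<close>

context
  fixes V :: "'a set" and E :: "'a \<Rightarrow> 'a \<Rightarrow> bool" and X :: "'a set"
  assumes G: "simple_graph V E" and XV: "X \<subseteq> V"
begin

lemma card_le_safe_set:
  "real (card V) \<le> real (card (safe_set V E X)) + real (card X) + real (card (nbhd V E X - X))"
proof -
  have fin: "finite V" using simple_graph_finite[OF G] .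
  have "V \<subseteq> safe_set V E X \<union> X \<union> (nbhd V E X - X)" by (auto simp: safe_set_def)
  then have "card V \<le> card (safe_set V E X \<union> X \<union> (nbhd V E X - X))"
    using fin XV by (intro card_mono) (auto simp: safe_set_def nbhd_def intro: finite_subset)
  also have "\<dots> \<le> card (safe_set V E X) + card X + card (nbhd V E X - X)"
    by (meson add_le_mono1 card_Un_le le_trans)
  finally show ?thesis by (simp flip: of_nat_add)
qed

lemma card_nbhd_Diff_le: "real (card (nbhd V E X - X)) \<le> card X * real (max_degree V E)"
proof -
  have "card (nbhd V E X - X) \<le> card (nbhd V E X)"
    using simple_graph_finite[OF G] by (intro card_mono) (auto simp: nbhd_def)
  then show ?thesis using card_nbhd_le[OF G XV] by (simp flip: of_nat_mult)
qed

text \<open>A boundary edge of the safe set ends in a vertex of \<open>nbhd V E X - X\<close>, and at least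
  one edge at that vertex goes to a cop instead of the safe set.\<close>
lemma card_edge_boundary_safe_set:
  "card (edge_boundary V E (safe_set V E X)) \<le> (max_degree V E - 1) * card (nbhd V E X - X)"
proof -
  let ?W = "safe_set V E X" and ?Y = "nbhd V E X - X"
  have "edge_boundary V E ?W \<subseteq> (\<Union>v\<in>?Y. (\<lambda>u. (u, v)) ` {u\<in>?W. E v u})"
  proof
    fix p assume "p \<in> edge_boundary V E ?W"
    then obtain u v where p: "p = (u, v)" "u \<in> ?W" "v \<in> V - ?W" "E u v"
      by (auto simp: edge_boundary_def)
    then have "v \<in> ?Y" using simple_graph_sym[OF G] by (auto simp: safe_set_def nbhd_def)
    then show "p \<in> (\<Union>v\<in>?Y. (\<lambda>u. (u, v)) ` {u\<in>?W. E v u})"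
      using p simple_graph_sym[OF G] by blast
  qed
  moreover have finY: "finite ?Y"
    using simple_graph_finite[OF G] by (auto simp: nbhd_def)
  ultimately have "card (edge_boundary V E ?W) \<le> card (\<Union>v\<in>?Y. (\<lambda>u. (u, v)) ` {u\<in>?W. E v u})"
    using simple_graph_finite[OF G] by (intro card_mono) (auto simp: safe_set_def)
  also have "\<dots> \<le> (\<Sum>v\<in>?Y. card ((\<lambda>u. (u, v)) ` {u\<in>?W. E v u}))"
    using finY by (rule card_UN_le)
  also have "\<dots> \<le> (\<Sum>v\<in>?Y. max_degree V E - 1)"
  proof (intro sum_mono)
    fix v assume v: "v \<in> ?Y"
    then obtain c where c: "c \<in> X" "E c v" by (auto simp: nbhd_def)
    have "{u\<in>?W. E v u} \<subseteq> {u. E v u} - {c}" using c by (auto simp: safe_set_def)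
    then have "card {u\<in>?W. E v u} \<le> card ({u. E v u} - {c})"
      by (intro card_mono) (auto intro: finite_neighbours[OF G])
    also have "\<dots> = degree E v - 1"
      using simple_graph_sym[OF G c(2)] finite_neighbours[OF G] by (simp add: degree_def)
    also have "\<dots> \<le> max_degree V E - 1"
      using v by (intro diff_le_mono degree_le_max_degree[OF G]) (auto simp: nbhd_def)
    finally show "card ((\<lambda>u. (u, v)) ` {u\<in>?W. E v u}) \<le> max_degree V E - 1"
      using card_image_le[of "{u\<in>?W. E v u}"] finite_neighbours[OF G, of v]
      by (metis (no_types, lifting) le_trans mem_Collect_eq rev_finite_subset subsetI)
  qed
  finally show ?thesis by (simp add: mult.commute)
qed

lemma nbhd_safe_closed_subset:
  "safe_closed V E X S \<Longrightarrow> nbhd V E S - S \<subseteq> nbhd V E X - X"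
  unfolding nbhd_def safe_closed_def safe_edge_def safe_set_def
  using simple_graph_sym[OF G] by blast

lemma exists_safe_closed_third:
  assumes small: "small_safe_comps V E X"
  obtains S where "safe_closed V E X S" "card (safe_set V E X) \<le> 3 * card S" "2 * card S \<le> card V"
proof (cases "safe_set V E X = {}")
  case True
  then show ?thesis using that[OF safe_closed_safe_set[of V E X]] by simp
next
  case False
  let ?W = "safe_set V E X" and ?m = "card (safe_set V E X)"
  have finW: "finite ?W" using finite_subset[OF safe_set_subset[of V E X] simple_graph_finite[OF G]] .
  have m: "0 < real ?m / 3" "real ?m / 3 \<le> ?m"
    using False finW by (auto simp: card_gt_0_iff)
  obtain S where S: "safe_closed V E X S" "real ?m / 3 \<le> card S"
      "2 * card S \<le> card V \<or> card S < 2 * (real ?m / 3)"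
    using exists_safe_closed_size_between[OF G small m] by blast
  show ?thesis
  proof (cases "2 * card S \<le> card V")
    case True
    then show ?thesis using that S by simp
  next
    case big: False
    have SW: "S \<subseteq> ?W" using S(1) by (simp add: safe_closed_def)
    have "card (?W - S) = ?m - card S" using card_Diff_subset[OF finite_subset[OF SW finW] SW] .
    moreover have "card S \<le> ?m" "?m \<le> card V"
      using card_mono[OF finW SW] card_mono[OF simple_graph_finite[OF G] safe_set_subset[of V E X]] .
    moreover have "real (3 * card S) < real (2 * ?m)" using S(3) big by simp
    then have "3 * card S < 2 * ?m" by (simp only: of_nat_less_iff)
    ultimately show ?thesis
      using that[OF safe_closed_Diff[OF G safe_closed_safe_set[of V E X] S(1)]] big by simp
  qed
qed

end

context
  fixes V :: "'a set" and E :: "'a \<Rightarrow> 'a \<Rightarrow> bool" and X :: "'a set"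
  assumes G: "simple_graph V E" and XV: "X \<subseteq> V" and small: "small_safe_comps V E X"
    and D1: "1 \<le> max_degree V E" and n2: "2 \<le> card V"
begin

lemma iota_v_mult_card_safe_closed:
  assumes "safe_closed V E X S" "2 * card S \<le> card V"
  shows "iota_v V E * card S \<le> card (nbhd V E X - X)"
proof -
  have "iota_v V E * card S \<le> card (nbhd V E S - S)"
    using iota_v_mult_card_le[OF G _ assms(2)] assms(1) safe_set_subset[of V E X]
    by (auto simp: safe_closed_def)
  also have "\<dots> \<le> card (nbhd V E X - X)"
    using nbhd_safe_closed_subset[OF G XV assms(1)]
    by (intro of_nat_mono card_mono) (auto simp: nbhd_def intro: rev_finite_subset[OF simple_graph_finite[OF G]])
  finally show ?thesis by simp
qed

lemma edge_iso_card_bound: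
  "iota_e V E * card V \<le> card X * (real (max_degree V E) ^ 2 - real (max_degree V E)
      + iota_e V E * (real (max_degree V E) + 1))"
proof -
  let ?i = "iota_e V E" and ?D = "real (max_degree V E)" and ?k = "real (card X)"
  let ?m = "real (card (safe_set V E X))" and ?y = "real (card (nbhd V E X - X))"
  have i0: "0 \<le> ?i" using iota_e_nonneg[OF G n2] .
  have "?i * ?m \<le> card (edge_boundary V E (safe_set V E X))"
    using iota_e_mult_card_safe_closed[OF G small safe_closed_safe_set] .
  also have "\<dots> \<le> real ((max_degree V E - 1) * card (nbhd V E X - X))"
    using card_edge_boundary_safe_set[OF G XV] by (rule of_nat_mono)
  also have "\<dots> = (?D - 1) * ?y" using D1 by (simp add: of_nat_diff)
  finally have boundary: "?i * ?m \<le> (?D - 1) * ?y" .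
  have "?i * card V \<le> ?i * (?m + ?k + ?y)"
    using card_le_safe_set[OF G XV] i0 by (rule mult_left_mono)
  also have "\<dots> \<le> (?D - 1 + ?i) * ?y + ?i * ?k" using boundary by (simp add: algebra_simps)
  also have "\<dots> \<le> (?D - 1 + ?i) * (?k * ?D) + ?i * ?k"
    using card_nbhd_Diff_le[OF G XV] D1 i0 by (intro add_right_mono mult_left_mono) auto
  also have "\<dots> = ?k * (?D ^ 2 - ?D + ?i * (?D + 1))" by (simp add: algebra_simps power2_eq_square)
  finally show ?thesis .
qed

lemma vertex_iso_card_bound:
  "iota_v V E * card V \<le> card X * (3 * real (max_degree V E)
      + iota_v V E * (real (max_degree V E) + 1))"
proof -
  let ?i = "iota_v V E" and ?D = "real (max_degree V E)" and ?k = "real (card X)"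
  let ?m = "real (card (safe_set V E X))" and ?y = "real (card (nbhd V E X - X))"
  have i0: "0 \<le> ?i" using iota_v_nonneg[OF G n2] .
  obtain S where S: "safe_closed V E X S" "card (safe_set V E X) \<le> 3 * card S" "2 * card S \<le> card V"
    using exists_safe_closed_third[OF G XV small] .
  have "?i * card V \<le> ?i * (?m + ?k + ?y)"
    using card_le_safe_set[OF G XV] i0 by (rule mult_left_mono)
  also have "\<dots> \<le> ?i * (3 * card S) + ?i * ?k + ?i * ?y"
    using S(2) i0 by (simp add: algebra_simps mult_left_mono)
  also have "\<dots> \<le> (3 + ?i) * ?y + ?i * ?k"
    using iota_v_mult_card_safe_closed[OF S(1,3)] by (simp add: algebra_simps)
  also have "\<dots> \<le> (3 + ?i) * (?k * ?D) + ?i * ?k"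
    using card_nbhd_Diff_le[OF G XV] i0 by (intro add_right_mono mult_left_mono) auto
  also have "\<dots> = ?k * (3 * ?D + ?i * (?D + 1))" by (simp add: algebra_simps)
  finally show ?thesis .
qed

text \<open>If the safe set has at least n/4 vertices, a union of its components of size
  between n/4 and n/2 does the job. Otherwise the cops and their neighbourhood cover more
  than 3n/4 vertices, and the crude bounds \<open>\<iota>\<^sub>v \<le> \<Delta>\<close> and, for n \<ge> 5, \<open>\<iota>\<^sub>v \<le> 3/2\<close> suffice.\<close>
lemma vertex_iso_card_bound':
  "iota_v V E * card V \<le> card X * (4 * real (max_degree V E))"
proof -
  let ?i = "iota_v V E" and ?D = "real (max_degree V E)" and ?k = "real (card X)"
  let ?m = "real (card (safe_set V E X))" and ?y = "real (card (nbhd V E X - X))"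
  have i0: "0 \<le> ?i" using iota_v_nonneg[OF G n2] .
  have y: "?y \<le> ?k * ?D" using card_nbhd_Diff_le[OF G XV] .
  show ?thesis
  proof (cases "real (card V) / 4 \<le> ?m")
    case True
    have "0 < real (card V) / 4" using n2 by simp
    then obtain S where S: "safe_closed V E X S" "real (card V) / 4 \<le> card S"
        "2 * card S \<le> card V \<or> card S < 2 * (real (card V) / 4)"
      using exists_safe_closed_size_between[OF G small _ True] by blast
    have "real (2 * card S) \<le> real (card V)" using S(3) by auto
    then have "2 * card S \<le> card V" by (simp only: of_nat_le_iff)
    have "?i * card V \<le> ?i * (4 * card S)" using S(2) i0 by (intro mult_left_mono) auto
    also have "\<dots> = 4 * (?i * card S)" by simp
    also have "\<dots> \<le> 4 * ?y" using iota_v_mult_card_safe_closed[OF S(1) \<open>2 * card S \<le> card V\<close>] by simp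
    finally show ?thesis using y by simp
  next
    case False
    then have "4 * ?m < card V" by simp
    then have covered: "3 * real (card V) < 4 * (?k + ?y)"
      using card_le_safe_set[OF G XV] by (smt (verit))
    show ?thesis
    proof (cases "card V \<le> 4 * card X")
      case True
      have "?i * card V \<le> ?D * card V"
        using iota_v_le_max_degree[OF G n2] by (intro mult_right_mono) auto
      also have "\<dots> \<le> ?D * (4 * ?k)" using True by (intro mult_left_mono) auto
      finally show ?thesis by (simp add: algebra_simps)
    next
      case False
      have "card X \<noteq> 0"
      proof
        assume "card X = 0"
        then show False using covered y by simp
      qed
      then have k1: "1 \<le> ?k" by simp
      then have "5 \<le> card V" using False by linarith
      then have "2 * ?i \<le> 3" by (rule iota_v_le_three_halves[OF G])
      then have "2 * ?i * card V \<le> 3 * real (card V)" by (intro mult_right_mono) auto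
      also have "\<dots> < 4 * (?k + ?y)" by (rule covered)
      also have "\<dots> \<le> 8 * (?k * ?D)"
        using y mult_left_mono[of 1 ?D ?k] D1 by simp
      finally show ?thesis by simp
    qed
  qed
qed

end

section \<open>The robber's strategy\<close>

lemma majorities_intersect:
  assumes "finite V" "A \<subseteq> V" "B \<subseteq> V" "card V < 2 * card A" "card V < 2 * card B"
  shows "A \<inter> B \<noteq> {}"
proof
  assume "A \<inter> B = {}"
  then have "card A + card B = card (A \<union> B)"
    using assms(1-3) by (intro card_Un_disjoint[symmetric]) (auto intro: finite_subset)
  also have "\<dots> \<le> card V"
    using assms(1-3) by (intro card_mono) auto
  finally show False using assms(4,5) by linarith
qed

lemma cop_move_subset:
  assumes G: "simple_graph V E" and "set C \<subseteq> V" and move: "cop_move E C C'"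
  shows "set C' \<subseteq> set C \<union> nbhd V E (set C)"
proof
  fix x assume "x \<in> set C'"
  then obtain i where i: "i < length C'" "C' ! i = x" by (auto simp: in_set_conv_nth)
  have "length C = length C'" using move by (simp add: cop_move_def list_all2_lengthD)
  then have "C ! i \<in> set C" "x = C ! i \<or> E (C ! i) x"
    using move i by (auto simp: cop_move_def list_all2_conv_all_nth)
  then show "x \<in> set C \<union> nbhd V E (set C)"
    using simple_graph_edgeD[OF G] by (auto simp: nbhd_def)
qed

text \<open>The invariant of the robber's strategy: she sits in a safe component with more
  than half of the vertices.\<close>
lemma robber_escapes:
  assumes G: "simple_graph V E"
    and big: "\<And>C. length C = k \<Longrightarrow> set C \<subseteq> V \<Longrightarrow> \<not> small_safe_comps V E (set C)"
  shows "cop_win E C r \<Longrightarrow> length C = k \<Longrightarrow> set C \<subseteq> V \<Longrightarrow> r \<in> safe_set V E (set C)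
    \<Longrightarrow> card V < 2 * card (safe_comp V E (set C) r) \<Longrightarrow> False"
proof (induction rule: cop_win.induct)
  case (capture C C' r)
  then show ?case using cop_move_subset[OF G capture(4,1)] by (auto simp: safe_set_def)
next
  case (step C C' r)
  let ?X = "set C" and ?X' = "set C'"
  have moved: "?X' \<subseteq> ?X \<union> nbhd V E ?X" using cop_move_subset[OF G step(5,1)] .
  have C': "length C' = k" "?X' \<subseteq> V"
    using step(1,4,5) moved by (auto simp: nbhd_def cop_move_def dest: list_all2_lengthD)
  then obtain w where w: "w \<in> safe_set V E ?X'" "card V < 2 * card (safe_comp V E ?X' w)"
    using big by (force simp: small_safe_comps_def)
  have "safe_comp V E ?X r \<subseteq> V"
    using safe_comp_subset_safe_closed[OF safe_closed_safe_set step(6)] safe_set_subset[of V E ?X]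
    by blast
  moreover have "safe_comp V E ?X' w \<subseteq> V"
    using safe_comp_subset_safe_closed[OF safe_closed_safe_set w(1)] safe_set_subset[of V E ?X']
    by blast
  ultimately have "safe_comp V E ?X r \<inter> safe_comp V E ?X' w \<noteq> {}"
    using majorities_intersect[OF simple_graph_finite[OF G] _ _ step(7) w(2)] by blast
  then obtain z where zr: "z \<in> safe_comp V E ?X r" and zw: "z \<in> safe_comp V E ?X' w" by blast
  have "(\<lambda>u v. E u v \<and> v \<notin> ?X')\<^sup>*\<^sup>* r z"
    using zr unfolding safe_comp_def mem_Collect_eq
    by (rule mono_rtranclp[rule_format, rotated]) (use moved in \<open>auto simp: safe_edge_def safe_set_def\<close>)
  moreover have "z \<in> safe_set V E ?X'" "card V < 2 * card (safe_comp V E ?X' z)"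
    using safe_comp_subset_safe_closed[OF safe_closed_safe_set w(1)] zw w(2)
      safe_comp_eq[OF G zw] by auto
  ultimately show False using step(3) C' by (auto simp: robber_reach_def)
qed

lemma not_cops_win_with:
  assumes G: "simple_graph V E"
    and big: "\<And>C. length C = k \<Longrightarrow> set C \<subseteq> V \<Longrightarrow> \<not> small_safe_comps V E (set C)"
  shows "\<not> cops_win_with V E k"
proof
  assume "cops_win_with V E k"
  then obtain C where C: "length C = k" "set C \<subseteq> V" "\<forall>r\<in>V - set C. cop_win E C r"
    by (auto simp: cops_win_with_def)
  obtain w where w: "w \<in> safe_set V E (set C)" "card V < 2 * card (safe_comp V E (set C) w)"
    using big[OF C(1,2)] by (auto simp: small_safe_comps_def not_le)
  then have "cop_win E C w" using C(3) by (auto simp: safe_set_def)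
  then show False using robber_escapes[OF G big _ C(1,2) w] by blast
qed

lemma cops_win_with_card: "finite V \<Longrightarrow> cops_win_with V E (card V)"
  by (metis Diff_cancel cops_win_with_def distinct_card empty_iff finite_distinct_list order_refl)

lemma c_inf_ge:
  assumes G: "simple_graph V E" and "0 \<le> a"
    and bound: "\<And>X. X \<subseteq> V \<Longrightarrow> small_safe_comps V E X \<Longrightarrow> a \<le> real (card X) * b"
  shows "a / b \<le> real (c_inf V E)"
proof (cases "0 < b")
  case False
  then have "a / b \<le> 0" using assms(2) by (simp add: divide_nonneg_nonpos)
  then show ?thesis by simp
next
  case True
  have "cops_win_with V E (c_inf V E)"
    unfolding c_inf_def
    by (rule LeastI[of "cops_win_with V E", OF cops_win_with_card[OF simple_graph_finite[OF G]]])
  then obtain C where C: "length C = c_inf V E" "set C \<subseteq> V" "small_safe_comps V E (set C)"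
    using not_cops_win_with[OF G] by blast
  have "a \<le> real (card (set C)) * b" using bound C(2,3) .
  also have "\<dots> \<le> real (c_inf V E) * b"
    using C(1) card_length[of C] True by (intro mult_right_mono) auto
  finally show ?thesis using True by (simp add: pos_divide_le_eq)
qed

lemma divide_le_divide_edge_iso_denominator:
  fixes i D n :: real
  assumes "1 \<le> D" "0 \<le> i" "i \<le> D" "0 \<le> n"
  shows "i * n / (2 * D ^ 2) \<le> i * n / (D ^ 2 - D + i * (D + 1))"
proof (cases "i = 0")
  case True
  then show ?thesis using assms by (simp add: power2_eq_square)
next
  case False
  have "D \<le> D * D" using mult_left_mono[of 1 D D] assms(1) by simp
  moreover have "0 < i * (D + 1)" using assms(1,2) False by simp
  ultimately have "0 < D ^ 2 - D + i * (D + 1)" unfolding power2_eq_square by linarith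
  moreover have "i * (D + 1) \<le> D * (D + 1)" using assms by (intro mult_right_mono) auto
  then have "D ^ 2 - D + i * (D + 1) \<le> 2 * D ^ 2" by (simp add: power2_eq_square algebra_simps)
  ultimately show ?thesis using assms by (intro divide_left_mono) auto
qed

theorem mainTheorem3:
  fixes V :: "'a set" and E :: "'a \<Rightarrow> 'a \<Rightarrow> bool"
  assumes "simple_graph V E" and "connected_graph V E" and "card V \<ge> 2"
  defines "n \<equiv> real (card V)" and "D \<equiv> real (max_degree V E)"
    and "ie \<equiv> iota_e V E" and "iv \<equiv> iota_v V E"
  shows "real (c_inf V E) \<ge> ie * n / (D^2 - D + ie * (D + 1))
       \<and> ie * n / (D^2 - D + ie * (D + 1)) \<ge> ie * n / (2 * D^2)
       \<and> real (c_inf V E) \<ge> iv * n / (3 * D + iv * (D + 1))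
       \<and> real (c_inf V E) \<ge> iv * n / (4 * D)"
proof -
  note G = assms(1)
  have D1: "1 \<le> max_degree V E" using max_degree_ge_1[OF G assms(2,3)] .
  have ie0: "0 \<le> ie * n" and iv0: "0 \<le> iv * n"
    using iota_e_nonneg[OF G assms(3)] iota_v_nonneg[OF G assms(3)] by (simp_all add: ie_def iv_def n_def)
  have "ie * n / (D^2 - D + ie * (D + 1)) \<le> real (c_inf V E)"
    using c_inf_ge[OF G ie0] edge_iso_card_bound[OF G _ _ D1 assms(3)] by (simp add: ie_def n_def D_def)
  moreover have "ie * n / (2 * D^2) \<le> ie * n / (D^2 - D + ie * (D + 1))"
    using divide_le_divide_edge_iso_denominator D1 iota_e_nonneg[OF G assms(3)]
      iota_e_le_max_degree[OF G assms(3)] by (simp add: ie_def D_def n_def)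
  moreover have "iv * n / (3 * D + iv * (D + 1)) \<le> real (c_inf V E)"
    using c_inf_ge[OF G iv0] vertex_iso_card_bound[OF G _ _ D1 assms(3)] by (simp add: iv_def n_def D_def)
  moreover have "iv * n / (4 * D) \<le> real (c_inf V E)"
    using c_inf_ge[OF G iv0] vertex_iso_card_bound'[OF G _ _ D1 assms(3)] by (simp add: iv_def n_def D_def)
  ultimately show ?thesis by simp
qed

end
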